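(* Let $\Delta=\{z\in\mathbb{C}:|z|<1\}$, let $\alpha\in(1/2,1)$ and let $\beta\in\mathbb{C}$ with $\mathrm{Re}\{\beta\}>-1/2$. If $f(z)=z|z|^{2\beta}h(z)\overline{g(z)}$, with $h,g$ analytic and non-vanishing in $\Delta$ and $h(0)=g(0)=1$, belongs to $\mathcal{S}^*_{LH}(\alpha)$, then $$\mathrm{Re}\left\{\frac{h(z)}{g(z)}\right\}>\frac{1}{3-2\alpha}\qquad(z\in\Delta).$$
   Context: A mapping $f$ is log-harmonic in $\Delta$ if there is an analytic $w$ in $\Delta$ with $|w(z)|<1$ such that $\overline{f_{\bar z}}/\overline{f}=w\,f_z/f$. For $0\le\alpha<1$, $\mathcal{S}^*_{LH}(\alpha)$ is the set of log-harmonic mappings $f(z)=z|z|^{2\beta}h(z)\overline{g(z)}$ with $h(0)=g(0)=1$ satisfying $\mathrm{Re}\left\{\frac{zf_z-\bar z f_{\bar z}}{f}\right\}>\alpha$ for all $z\in\Delta$. *)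

theory Defs
  imports "HOL-Analysis.Analysis"
begin

definition wirt_z :: "(complex \<Rightarrow> complex) \<Rightarrow> complex \<Rightarrow> complex" where
  "wirt_z f z = (frechet_derivative f (at z) 1 - \<i> * frechet_derivative f (at z) \<i>) / 2"

definition wirt_zbar :: "(complex \<Rightarrow> complex) \<Rightarrow> complex \<Rightarrow> complex" where
  "wirt_zbar f z = (frechet_derivative f (at z) 1 + \<i> * frechet_derivative f (at z) \<i>) / 2"

definition log_harmonic_on :: "complex set \<Rightarrow> (complex \<Rightarrow> complex) \<Rightarrow> bool" where
  "log_harmonic_on S f \<longleftrightarrow>
     (\<forall>z\<in>S. f z \<noteq> 0 \<longrightarrow> f differentiable (at z)) \<and>
     (\<exists>w. w analytic_on S \<and> (\<forall>z\<in>S. norm (w z) < 1) \<and>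
          (\<forall>z\<in>S. f z \<noteq> 0 \<longrightarrow>
              cnj (wirt_zbar f z) / cnj (f z) = w z * wirt_z f z / f z))"

text \<open>The map z |z|^(2 beta) h(z) conj(g(z)); the power is 0 at z = 0 (so f 0 = 0).\<close>
definition lh_map :: "complex \<Rightarrow> (complex \<Rightarrow> complex) \<Rightarrow> (complex \<Rightarrow> complex) \<Rightarrow> complex \<Rightarrow> complex" where
  "lh_map \<beta> h g z = z * (complex_of_real (norm z)) powr (2 * \<beta>) * h z * cnj (g z)"

definition starlike_LH :: "real \<Rightarrow> (complex \<Rightarrow> complex) \<Rightarrow> bool" where
  "starlike_LH \<alpha> f \<longleftrightarrow>
     log_harmonic_on (ball 0 1) f \<and>
     (\<exists>\<beta> h g. h analytic_on ball 0 1 \<and> g analytic_on ball 0 1 \<and> h 0 = 1 \<and> g 0 = 1 \<and>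
              f = lh_map \<beta> h g) \<and>
     (\<forall>z\<in>ball 0 1. f z \<noteq> 0 \<longrightarrow>
         Re ((z * wirt_z f z - cnj z * wirt_zbar f z) / f z) > \<alpha>)"

end

theory Submission
  imports Defs "HOL-Complex_Analysis.Complex_Analysis"
begin

text \<open>Write q = h/g. The Wirtinger derivatives of f = z |z|^(2 beta) h conj g give
  (z f_z - conj z f_zbar)/f = 1 + z h'/h - conj (z g'/g), whose real part is 1 + Re (z q'/q);
  so starlikeness of order alpha says Re (z q'/q) > alpha - 1.
  A Jack-type argument then shows Re q > gamma = 1/(3 - 2 alpha): at a point z0 of least modulus
  with Re q(z0) = gamma, Re q is minimal on the circle |z| = |z0|, so z0 q'(z0) is real; the Schwarz
  lemma applied to (q(z0 w) - 1)/(q(z0 w) + 1 - 2 gamma) bounds z0 q'(z0) from above, and this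
  contradicts Re (z0 q'(z0)/q(z0)) > alpha - 1 = -(1 - gamma)/(2 gamma).\<close>

lemma Re_first_boundary_point:
  fixes q :: "complex \<Rightarrow> complex"
  assumes cont: "continuous_on (ball 0 1) q" and q0: "Re (q 0) > \<gamma>"
    and z1: "z1 \<in> ball 0 1" "Re (q z1) \<le> \<gamma>"
  obtains z0 where "z0 \<in> ball 0 1" "z0 \<noteq> 0" "Re (q z0) = \<gamma>"
    "\<And>z. norm z < norm z0 \<Longrightarrow> Re (q z) > \<gamma>"
    "\<And>z. norm z \<le> norm z0 \<Longrightarrow> Re (q z) \<ge> \<gamma>"
proof -
  have contRe: "continuous_on S (\<lambda>z. Re (q z))" if "S \<subseteq> ball 0 1" for S
    using continuous_on_Re[OF continuous_on_subset[OF cont that]] .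
  define K where "K = {z \<in> cball 0 (norm z1). Re (q z) \<le> \<gamma>}"
  have "closed K" unfolding K_def
    using z1(1) by (intro continuous_on_closed_Collect_le contRe continuous_on_const) auto
  moreover have "K = cball 0 (norm z1) \<inter> K" unfolding K_def by auto
  ultimately have "compact K" by (metis compact_Int_closed compact_cball)
  moreover have "K \<noteq> {}" using z1 unfolding K_def by auto
  ultimately obtain z0 where z0K: "z0 \<in> K" and z0min: "\<And>z. z \<in> K \<Longrightarrow> norm z0 \<le> norm z"
    using continuous_attains_inf[of K norm] continuous_on_norm_id by blast
  have z0: "z0 \<in> ball 0 1" "Re (q z0) \<le> \<gamma>" "z0 \<noteq> 0"
    using z0K z1(1) q0 unfolding K_def by auto
  have inside: "Re (q z) > \<gamma>" if "norm z < norm z0" for z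
    using z0min[of z] z0K that unfolding K_def by force
  have closed_disc: "Re (q z) \<ge> \<gamma>" if "norm z \<le> norm z0" for z
  proof -
    let ?A = "{z \<in> cball 0 (norm z0). \<gamma> \<le> Re (q z)}"
    have "closed ?A"
      using z0(1) by (intro continuous_on_closed_Collect_le contRe continuous_on_const) auto
    moreover have "ball 0 (norm z0) \<subseteq> ?A" using inside by (auto intro: less_imp_le)
    ultimately have "closure (ball 0 (norm z0)) \<subseteq> ?A" by (rule closure_minimal[rotated])
    then show ?thesis using that z0(3) by auto
  qed
  show thesis
    using that[OF z0(1,3) _ inside closed_disc] closed_disc[of z0] z0(2) by simp
qed

lemma Im_mult_deriv_eq_0_if_min_on_circle:
  fixes q :: "complex \<Rightarrow> complex"
  assumes qd: "(q has_field_derivative q') (at z0)"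
    and min: "\<And>z. norm z = norm z0 \<Longrightarrow> Re (q z0) \<le> Re (q z)"
  shows "Im (z0 * q') = 0"
proof -
  have e: "((\<lambda>\<theta>. z0 * exp (\<i> * \<theta>)) has_field_derivative z0 * \<i>) (at (of_real 0))"
    by (rule derivative_eq_intros | simp)+
  have "((\<lambda>\<theta>. q (z0 * exp (\<i> * \<theta>))) has_field_derivative q' * (z0 * \<i>)) (at (of_real 0))"
    using DERIV_chain2[of q q' "\<lambda>\<theta>. z0 * exp (\<i> * \<theta>)", OF _ e] qd by simp
  then have "((\<lambda>\<theta>. q (z0 * exp (\<i> * of_real \<theta>))) has_vector_derivative q' * (z0 * \<i>)) (at 0)"
    by (rule has_vector_derivative_real_field)
  then have "((\<lambda>\<theta>. Re (q (z0 * exp (\<i> * of_real \<theta>)))) has_real_derivative Re (q' * (z0 * \<i>))) (at 0)"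
    by (rule has_field_derivative_Re)
  then have "Re (q' * (z0 * \<i>)) = 0"
    by (rule DERIV_local_min[OF _ zero_less_one]) (auto intro!: min simp: norm_mult)
  then show ?thesis by (simp add: mult_ac)
qed

lemma norm_sub_one_lt_norm_add:
  fixes x :: complex
  assumes "Re x > \<gamma>" "\<gamma> < 1"
  shows "norm (x - 1) < norm (x + of_real (1 - 2*\<gamma>))"
proof -
  have "(Re x + (1 - 2*\<gamma>))^2 - (Re x - 1)^2 = (2*Re x - 2*\<gamma>) * (2 - 2*\<gamma>)"
    by (simp add: power2_eq_square algebra_simps)
  also have "\<dots> > 0" using assms by simp
  finally have "(norm (x - 1))^2 < (norm (x + of_real (1 - 2*\<gamma>)))^2"
    by (simp add: cmod_power2)
  then show ?thesis by (simp add: power2_less_imp_less)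
qed

text \<open>Subordination of p to the half-plane map (1 + (1 - 2 gamma) w)/(1 - w).\<close>
lemma norm_sub_one_le_if_Re_gt:
  fixes p :: "complex \<Rightarrow> complex"
  assumes hol: "p holomorphic_on ball 0 1" and p0: "p 0 = 1"
    and Re_p: "\<And>w. norm w < 1 \<Longrightarrow> Re (p w) > \<gamma>" and \<gamma>: "\<gamma> < 1" and w: "norm w < 1"
  shows "norm (p w - 1) \<le> norm w * norm (p w + of_real (1 - 2*\<gamma>))"
proof -
  define a where "a = complex_of_real (1 - 2*\<gamma>)"
  define \<psi> where "\<psi> = (\<lambda>w. (p w - 1) / (p w + a))"
  have lt: "norm (p w - 1) < norm (p w + a)" if "norm w < 1" for w
    using norm_sub_one_lt_norm_add[OF Re_p[OF that] \<gamma>] unfolding a_def .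
  then have den: "p w + a \<noteq> 0" if "norm w < 1" for w
    using that by fastforce
  have "\<psi> holomorphic_on ball 0 1" unfolding \<psi>_def
    using den by (intro holomorphic_intros hol) auto
  moreover have "\<psi> 0 = 0" unfolding \<psi>_def using p0 by simp
  moreover have "norm (\<psi> w) < 1" if "norm w < 1" for w
    unfolding \<psi>_def using lt[OF that] den[OF that] by (simp add: norm_divide divide_less_eq)
  ultimately have "norm (\<psi> w) \<le> norm w" using Schwarz_Lemma(1) w by blast
  then show ?thesis
    using den[OF w] unfolding \<psi>_def a_def by (simp add: norm_divide divide_le_eq mult_ac)
qed

lemma DERIV_nonpos_at_1_if_ge_on_left:
  assumes "(G has_real_derivative G') (at 1)" "G 1 = 0"
    and "\<And>t. 0 \<le> t \<Longrightarrow> t < 1 \<Longrightarrow> G t \<ge> 0"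
  shows "G' \<le> 0"
proof (rule ccontr)
  assume "\<not> G' \<le> 0"
  then obtain d where d: "d > 0" "\<And>h. 0 < h \<Longrightarrow> h < d \<Longrightarrow> G (1 - h) < G 1"
    using DERIV_pos_inc_left[OF assms(1)] by force
  define h where "h = min (d/2) (1/2)"
  have "G (1 - h) < 0" using d assms(2) unfolding h_def by auto
  moreover have "G (1 - h) \<ge> 0" using d by (intro assms(3)) (auto simp: h_def)
  ultimately show False by simp
qed

text \<open>Differentiating t^2 |Q t + 1 - 2 gamma|^2 - |Q t - 1|^2, which is nonnegative on [0, 1)
  and vanishes at t = 1.\<close>
lemma radial_derivative_bound:
  fixes Q :: "real \<Rightarrow> complex"
  assumes QD: "(Q has_vector_derivative D) (at 1)" and Q1: "Re (Q 1) = \<gamma>"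
    and bound: "\<And>t. 0 \<le> t \<Longrightarrow> t < 1 \<Longrightarrow> norm (Q t - 1) \<le> t * norm (Q t + of_real (1 - 2*\<gamma>))"
  shows "(1-\<gamma>)^2 + (Im (Q 1))^2 + 2*(1-\<gamma>)*Re D \<le> 0"
proof -
  define G where "G = (\<lambda>t::real. t^2 * ((Re (Q t) + (1 - 2*\<gamma>))^2 + (Im (Q t))^2)
                                  - ((Re (Q t) - 1)^2 + (Im (Q t))^2))"
  have "(G has_real_derivative
      (2 * 1 * ((Re (Q 1) + (1 - 2*\<gamma>))^2 + (Im (Q 1))^2)
       + 1^2 * (2 * (Re (Q 1) + (1 - 2*\<gamma>)) * Re D + 2 * Im (Q 1) * Im D))
      - (2 * (Re (Q 1) - 1) * Re D + 2 * Im (Q 1) * Im D)) (at 1)"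
    unfolding G_def
    by (rule derivative_eq_intros QD refl | simp add: algebra_simps)+
  moreover have "G 1 = 0" unfolding G_def using Q1 by (simp add: power2_eq_square algebra_simps)
  moreover have "G t \<ge> 0" if "0 \<le> t" "t < 1" for t
  proof -
    have "(norm (Q t - 1))^2 \<le> (t * norm (Q t + of_real (1 - 2*\<gamma>)))^2"
      using bound[OF that] by (intro power_mono) auto
    then show ?thesis unfolding G_def by (simp add: cmod_power2 power_mult_distrib)
  qed
  ultimately have "2 * ((Re (Q 1) + (1 - 2*\<gamma>))^2 + (Im (Q 1))^2)
       + (2 * (Re (Q 1) + (1 - 2*\<gamma>)) * Re D + 2 * Im (Q 1) * Im D)
      - (2 * (Re (Q 1) - 1) * Re D + 2 * Im (Q 1) * Im D) \<le> 0"
    using DERIV_nonpos_at_1_if_ge_on_left by fastforce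
  then show ?thesis using Q1 by (simp add: power2_eq_square algebra_simps)
qed

lemma Re_div_le_of_radial_bound:
  fixes \<gamma> s R :: real
  assumes "1/2 \<le> \<gamma>" "\<gamma> < 1" and H: "(1-\<gamma>)^2 + s^2 + 2*(1-\<gamma>)*R \<le> 0"
  shows "R * \<gamma> / (\<gamma>^2 + s^2) \<le> -(1-\<gamma>)/(2*\<gamma>)"
proof -
  have \<gamma>0: "\<gamma> > 0" using assms by simp
  have p: "\<gamma>^2 + s^2 > 0" using \<gamma>0 by (simp add: add_pos_nonneg)
  have "\<gamma>^2 * ((1-\<gamma>)^2 + s^2 + 2*(1-\<gamma>)*R) \<le> 0"
    using H by (simp add: mult_nonneg_nonpos)
  moreover have "s^2 * (1 - 2*\<gamma>) \<le> 0" using assms by (simp add: mult_nonneg_nonpos)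
  ultimately have "(1-\<gamma>) * (2*\<gamma>^2*R + (1-\<gamma>)*(\<gamma>^2+s^2)) \<le> 0"
    by (simp add: algebra_simps power2_eq_square)
  then have "2*\<gamma>^2*R + (1-\<gamma>)*(\<gamma>^2+s^2) \<le> 0"
    using assms by (simp add: mult_le_0_iff)
  then show ?thesis using \<gamma>0 p by (simp add: field_simps power2_eq_square)
qed

lemma Re_gt_if_Re_logderiv_gt:
  fixes q :: "complex \<Rightarrow> complex" and \<gamma> :: real
  assumes hol: "q holomorphic_on ball 0 1" and q0: "q 0 = 1"
    and \<gamma>1: "1/2 \<le> \<gamma>" and \<gamma>2: "\<gamma> < 1"
    and logderiv: "\<And>z. z \<in> ball 0 1 \<Longrightarrow> Re (z * deriv q z / q z) > -(1-\<gamma>)/(2*\<gamma>)"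
    and z: "z \<in> ball 0 1"
  shows "Re (q z) > \<gamma>"
proof (rule ccontr)
  assume "\<not> ?thesis"
  then obtain z0 where z0: "z0 \<in> ball 0 1" "z0 \<noteq> 0" "Re (q z0) = \<gamma>"
    and inside: "\<And>z. norm z < norm z0 \<Longrightarrow> Re (q z) > \<gamma>"
    and closed_disc: "\<And>z. norm z \<le> norm z0 \<Longrightarrow> Re (q z) \<ge> \<gamma>"
    using Re_first_boundary_point[OF holomorphic_on_imp_continuous_on[OF hol], of \<gamma> z] q0 \<gamma>2 z
    by (auto simp: not_less)
  define D where "D = z0 * deriv q z0"
  have qd: "(q has_field_derivative deriv q z0) (at z0)"
    using holomorphic_derivI[OF hol open_ball z0(1)] .
  have ImD: "Im D = 0"
    unfolding D_def using z0(3) closed_disc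
    by (intro Im_mult_deriv_eq_0_if_min_on_circle[OF qd]) auto
  have scaled_in_disc: "z0 * w \<in> ball 0 (norm z0)" if "norm w < 1" for w
    using that z0(2) by (simp add: norm_mult)
  have "(\<lambda>w. q (z0 * w)) holomorphic_on ball 0 1"
    using z0(1) scaled_in_disc
    by (intro holomorphic_on_compose_gen[OF _ hol, unfolded o_def] holomorphic_intros)
       (fastforce simp: subset_iff)
  then have "norm (q (z0 * of_real t) - 1) \<le> t * norm (q (z0 * of_real t) + of_real (1 - 2*\<gamma>))"
    if "0 \<le> t" "t < 1" for t
    using norm_sub_one_le_if_Re_gt[of "\<lambda>w. q (z0 * w)" \<gamma> "of_real t"] q0 \<gamma>2 that
      inside scaled_in_disc by auto
  moreover have "((\<lambda>t. q (z0 * of_real t)) has_vector_derivative D) (at 1)"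
  proof -
    have "((\<lambda>w. z0 * w) has_field_derivative z0) (at (of_real 1))"
      by (rule derivative_eq_intros | simp)+
    then have "((\<lambda>w. q (z0 * w)) has_field_derivative deriv q z0 * z0) (at (of_real 1))"
      using DERIV_chain2[of q "deriv q z0"] qd by simp
    then have "((\<lambda>t. q (z0 * of_real t)) has_vector_derivative deriv q z0 * z0) (at 1)"
      by (rule has_vector_derivative_real_field)
    then show ?thesis by (simp add: D_def mult_ac)
  qed
  ultimately have "(1-\<gamma>)^2 + (Im (q z0))^2 + 2*(1-\<gamma>)*Re D \<le> 0"
    using radial_derivative_bound[of "\<lambda>t. q (z0 * of_real t)" D \<gamma>] z0(3) by simp
  from Re_div_le_of_radial_bound[OF \<gamma>1 \<gamma>2 this] ImD z0(3)
  have "Re (D / q z0) \<le> -(1-\<gamma>)/(2*\<gamma>)" by (simp add: Re_divide)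
  with logderiv[OF z0(1)] show False unfolding D_def by simp
qed


lemma norm_powr_eq_exp_Ln_mult_cnj:
  fixes w :: complex assumes "w \<noteq> 0"
  shows "complex_of_real (norm w) powr (2*\<beta>) = exp (\<beta> * Ln (w * cnj w))"
proof -
  have n: "norm w > 0" using assms by simp
  have "Ln (w * cnj w) = Ln (complex_of_real ((norm w)^2))"
    using complex_norm_square[of w] by simp
  also have "\<dots> = of_real (ln ((norm w)^2))"
    by (rule Ln_of_real) (simp add: assms)
  also have "\<dots> = 2 * of_real (ln (norm w))" using n by (simp add: ln_realpow)
  finally show ?thesis using n by (simp add: powr_def Ln_of_real mult_ac)
qed

lemma has_derivative_exp_Ln_mult_cnj:
  fixes z :: complex assumes "z \<noteq> 0"
  shows "((\<lambda>w. exp (\<beta> * Ln (w * cnj w))) has_derivative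
          (\<lambda>v. exp (\<beta> * Ln (z * cnj z)) * \<beta> * (v / z + cnj v / cnj z))) (at z)"
proof -
  have sq: "((\<lambda>w. w * cnj w) has_derivative (\<lambda>v. z * cnj v + v * cnj z)) (at z)"
    by (rule has_derivative_mult[OF has_derivative_ident has_derivative_cnj[OF has_derivative_ident]])
  have "z * cnj z = complex_of_real ((norm z)^2)" using complex_norm_square[of z] by simp
  then have "z * cnj z \<notin> \<real>\<^sub>\<le>\<^sub>0" using assms unfolding nonpos_Reals_def
    by (auto simp del: of_real_power simp add: of_real_eq_iff)
  then have "((\<lambda>u. exp (\<beta> * Ln u)) has_field_derivative
      exp (\<beta> * Ln (z * cnj z)) * (\<beta> * inverse (z * cnj z))) (at (z * cnj z))"
    by (intro derivative_eq_intros has_field_derivative_Ln) auto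
  from has_derivative_compose[OF sq this[unfolded has_field_derivative_def]]
  show ?thesis
    by (rule has_derivative_eq_rhs) (auto simp: fun_eq_iff field_simps assms)
qed

lemma has_derivative_lh_map:
  fixes z :: complex
  assumes z: "z \<noteq> 0" and hd: "(h has_field_derivative h') (at z)"
    and gd: "(g has_field_derivative g') (at z)"
  shows "(lh_map \<beta> h g has_derivative (\<lambda>v.
     exp (\<beta> * Ln (z * cnj z)) * cnj (g z) * (h z * (1+\<beta>) + z*h') * v +
     exp (\<beta> * Ln (z * cnj z)) * h z * (z*\<beta>*cnj (g z)/cnj z + z*cnj g') * cnj v)) (at z)"
proof -
  let ?E = "\<lambda>w. exp (\<beta> * Ln (w * cnj w))"
  have "(h has_derivative (\<lambda>v. h' * v)) (at z)" "(g has_derivative (\<lambda>v. g' * v)) (at z)"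
    using hd gd by (simp_all add: has_field_derivative_def)
  then have D: "((\<lambda>w. w * ?E w * h w * cnj (g w)) has_derivative
     (\<lambda>v. (z * ?E z * h z) * cnj (g' * v) + ((z * ?E z) * (h' * v)
        + (z * (?E z * \<beta> * (v / z + cnj v / cnj z)) + v * ?E z) * h z) * cnj (g z))) (at z)"
    by (intro has_derivative_mult has_derivative_ident has_derivative_exp_Ln_mult_cnj[OF z]
        has_derivative_cnj)
  have "(lh_map \<beta> h g has_derivative
     (\<lambda>v. (z * ?E z * h z) * cnj (g' * v) + ((z * ?E z) * (h' * v)
        + (z * (?E z * \<beta> * (v / z + cnj v / cnj z)) + v * ?E z) * h z) * cnj (g z))) (at z)"
  proof (rule has_derivative_transform_within_open[OF D, of "-{0}"])
    fix w :: complex assume "w \<in> -{0}"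
    then show "w * ?E w * h w * cnj (g w) = lh_map \<beta> h g w"
      by (simp add: lh_map_def norm_powr_eq_exp_Ln_mult_cnj)
  qed (use z in auto)
  then show ?thesis
    by (rule has_derivative_eq_rhs) (auto simp: fun_eq_iff field_simps z)
qed

lemma wirtinger_eqI:
  assumes "(f has_derivative (\<lambda>v. a * v + b * cnj v)) (at z)"
  shows "wirt_z f z = a" "wirt_zbar f z = b"
proof -
  have D: "frechet_derivative f (at z) = (\<lambda>v. a * v + b * cnj v)"
    using frechet_derivative_at[OF assms] by simp
  show "wirt_z f z = a" "wirt_zbar f z = b"
    unfolding wirt_z_def wirt_zbar_def D by (simp_all add: field_simps)
qed

lemma starlike_quotient_lh_map:
  fixes z :: complex
  assumes z: "z \<noteq> 0" and hd: "(h has_field_derivative h') (at z)"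
    and gd: "(g has_field_derivative g') (at z)" and hz: "h z \<noteq> 0" and gz: "g z \<noteq> 0"
  shows "(z * wirt_z (lh_map \<beta> h g) z - cnj z * wirt_zbar (lh_map \<beta> h g) z) / lh_map \<beta> h g z
     = 1 + z * h' / h z - cnj (z * g' / g z)"
proof -
  note W = wirtinger_eqI[OF has_derivative_lh_map[OF z hd gd, of \<beta>]]
  have "lh_map \<beta> h g z = z * exp (\<beta> * Ln (z * cnj z)) * h z * cnj (g z)"
    by (simp add: lh_map_def norm_powr_eq_exp_Ln_mult_cnj z)
  then show ?thesis unfolding W using z hz gz
    by (simp add: field_simps exp_not_eq_zero)
qed

lemma starlike_LH_imp_Re_logderiv_gt:
  assumes hol: "h holomorphic_on ball 0 1" "g holomorphic_on ball 0 1"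
    and nz: "\<forall>z\<in>ball 0 1. h z \<noteq> 0" "\<forall>z\<in>ball 0 1. g z \<noteq> 0"
    and f: "starlike_LH \<alpha> (lh_map \<beta> h g)" and \<alpha>: "\<alpha> < 1" and z: "z \<in> ball 0 1"
  shows "Re (z * deriv (\<lambda>z. h z / g z) z / (h z / g z)) > \<alpha> - 1"
proof (cases "z = 0")
  case True
  then show ?thesis using \<alpha> by simp
next
  case False
  have hd: "(h has_field_derivative deriv h z) (at z)" and gd: "(g has_field_derivative deriv g z) (at z)"
    using holomorphic_derivI[OF _ open_ball z] hol by auto
  have hz: "h z \<noteq> 0" and gz: "g z \<noteq> 0" using nz z by auto
  have "lh_map \<beta> h g z \<noteq> 0" using False hz gz by (simp add: lh_map_def powr_def)
  then have "Re (1 + z * deriv h z / h z - cnj (z * deriv g z / g z)) > \<alpha>"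
    using f z starlike_quotient_lh_map[OF False hd gd hz gz, of \<beta>]
    unfolding starlike_LH_def by auto
  moreover have "Re (1 + z * deriv h z / h z - cnj (z * deriv g z / g z))
      = 1 + Re (z * deriv h z / h z - z * deriv g z / g z)"
    by (simp del: complex_cnj_divide complex_cnj_mult)
  moreover have dq: "deriv (\<lambda>z. h z / g z) z = (deriv h z * g z - h z * deriv g z) / (g z * g z)"
    using DERIV_divide[OF hd gd gz] by (rule DERIV_imp_deriv)
  then have "z * deriv (\<lambda>z. h z / g z) z / (h z / g z) = z * deriv h z / h z - z * deriv g z / g z"
    unfolding dq using hz gz by (simp add: field_simps)
  ultimately show ?thesis by simp
qed

theorem mainTheorem4:
  fixes \<alpha> :: real and \<beta> :: complex and h g :: "complex \<Rightarrow> complex"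
  assumes "1/2 < \<alpha>" and "\<alpha> < 1"
    and "Re \<beta> > -1/2"
    and "h analytic_on ball 0 1" and "g analytic_on ball 0 1"
    and "\<forall>z\<in>ball 0 1. h z \<noteq> 0" and "\<forall>z\<in>ball 0 1. g z \<noteq> 0"
    and "h 0 = 1" and "g 0 = 1"
    and "starlike_LH \<alpha> (lh_map \<beta> h g)"
  shows "\<forall>z\<in>ball 0 1. Re (h z / g z) > 1 / (3 - 2 * \<alpha>)"
proof
  fix z :: complex assume z: "z \<in> ball 0 1"
  define \<gamma> where "\<gamma> = 1 / (3 - 2*\<alpha>)"
  have \<gamma>: "1/2 \<le> \<gamma>" "\<gamma> < 1" "-(1-\<gamma>)/(2*\<gamma>) = \<alpha> - 1"
    unfolding \<gamma>_def using assms(1,2) by (simp_all add: field_simps)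
  have hol: "h holomorphic_on ball 0 1" "g holomorphic_on ball 0 1"
    using assms(4,5) by (simp_all add: analytic_imp_holomorphic)
  have quotient_hol: "(\<lambda>z. h z / g z) holomorphic_on ball 0 1"
    using hol assms(7) by (intro holomorphic_intros) auto
  have logderiv: "Re (w * deriv (\<lambda>z. h z / g z) w / (h w / g w)) > -(1-\<gamma>)/(2*\<gamma>)"
    if "w \<in> ball 0 1" for w
    unfolding \<gamma>(3) using starlike_LH_imp_Re_logderiv_gt[OF hol assms(6,7,10,2) that] .
  have "Re (h z / g z) > \<gamma>"
    using Re_gt_if_Re_logderiv_gt[OF quotient_hol _ \<gamma>(1,2) logderiv z] assms(8,9) by simp
  then show "Re (h z / g z) > 1 / (3 - 2 * \<alpha>)" unfolding \<gamma>_def .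
qed

end
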